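(* For any $i\le r-2$ the divisor $X_i$ restricted to the $L$-resolution is equal to the divisor $X^L_j$, where $j=(i \bmod (r-a))$, and the divisor $X_i$ restricted to the $R$-resolution is equal to the divisor $X^R_j$, where $j=(i \bmod a)$.
   Context: Let $0<a<r$ be coprime integers, $b$ the inverse of $a$ modulo $r$, and for integers $s,t$ let $(s \bmod t)$ denote the least non-negative integer $u$ with $t\mid s-u$. Let $N=\mathbb{Z}^3+\mathbb{Z}\frac1r(1,a,r-a)$, and $p_i=\frac1r\big((-ib \bmod r),\,r-i,\,i\big)$ for $i=0,\ldots,r$ (so $p_0=e_2$, $p_r=e_3$, $p_{r-a}=\frac1r(1,a,r-a)$). The Danilov resolution of the toric singularity $\frac1r(1,a,r-a)$ (cone $\langle e_1,e_2,e_3\rangle$ in $N$) is obtained by the weighted blow-up at $p_{r-a}$ followed recursively by the Danilov resolutions of the cones $\langle e_1,e_2,p_{r-a}\rangle$ and $\langle e_1,e_3,p_{r-a}\rangle$, which are toric singularities of type $\frac{1}{r-a}(1,(r \bmod (r-a)),(-r \bmod (r-a)))$ and $\frac1a(1,(-r \bmod a),(r \bmod a))$ respectively; their resolutions are called the $L$-resolution and the $R$-resolution. Let $D_k$ be the toric divisor of the ray through $p_k$ and $E_1$ the toric divisor of the ray through $e_1$. The permutation $\tau(r,a,\cdot)$ of $\{0,\ldots,r-1\}$ is defined recursively: if $a\in\{1,r-1\}$, $\tau(r,a,i)=(ai-1 \bmod r)$; otherwise $\tau(r,a,i)=\tau(r-a,(r\bmod (r-a)),(i \bmod (r-a)))$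 if $i\ge a$, and $\tau(r,a,i)=(r-a)+\tau(a,(-r \bmod a),i)$ if $i<a$. Set $Z_i=\sum_{k=\tau(r,a,i)+1}^{r}D_k$, and define divisors $X_i$ ($i=0,\ldots,r-1$, indices modulo $r$) by $X_i+Z_{i+1}=Z_i+X_{i-a}$ for all $i$ and $X_0=E_1$. The divisors $X^L_j$ (resp. $X^R_j$) on the $L$- (resp. $R$-)resolution are defined by the same construction with $(r,a)$ replaced by $(r-a,(r\bmod(r-a)))$ (resp. $(a,(-r\bmod a))$). *)

theory Defs
  imports Main
begin

text \<open>Labels of the torus-invariant prime divisors of the Danilov resolution of
  the singularity 1/r(1,a,r-a): E1 is the divisor of the ray through e1, and
  D k is the divisor D_k of the ray through p_k (0 <= k <= r).\<close>

datatype tlabel = E1 | D int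

type_synonym tdivisor = "tlabel \<Rightarrow> int"

text \<open>The permutation tau(r,a,.) (all mod operations are least non-negative
  residues, which is Isabelle's int mod for positive modulus).  Outside the
  meaningful range 0 < a < r it is set to 0 (irrelevant convention).\<close>

function tau :: "int \<Rightarrow> int \<Rightarrow> int \<Rightarrow> int" where
  "tau r a i =
     (if a = 1 \<or> a = r - 1 then (a * i - 1) mod r
      else if a \<le> 0 \<or> r \<le> a then 0
      else if a \<le> i then tau (r - a) (r mod (r - a)) (i mod (r - a))
      else (r - a) + tau a ((- r) mod a) i)"
  by pat_completeness auto
termination
  by (relation "measure (\<lambda>(r, a, i). nat r)") auto

definition Ediv :: tdivisor where
  "Ediv = (\<lambda>l. case l of E1 \<Rightarrow> 1 | D k \<Rightarrow> 0)"

definition Zdiv :: "int \<Rightarrow> int \<Rightarrow> int \<Rightarrow> tdivisor" where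
  "Zdiv r a i = (\<lambda>l. case l of E1 \<Rightarrow> 0
                   | D k \<Rightarrow> (if tau r a i + 1 \<le> k \<and> k \<le> r then 1 else 0))"

definition Xsys :: "int \<Rightarrow> int \<Rightarrow> (int \<Rightarrow> tdivisor) \<Rightarrow> bool" where
  "Xsys r a X \<longleftrightarrow>
     X 0 = Ediv \<and>
     (\<forall>i. 0 \<le> i \<and> i < r \<longrightarrow>
        (\<forall>l. X i l + Zdiv r a ((i + 1) mod r) l = Zdiv r a i l + X ((i - a) mod r) l)) \<and>
     (\<forall>i. \<not> (0 \<le> i \<and> i < r) \<longrightarrow> X i = (\<lambda>l. 0))"

definition Xdiv :: "int \<Rightarrow> int \<Rightarrow> int \<Rightarrow> tdivisor" where
  "Xdiv r a = (THE X. Xsys r a X)"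

text \<open>Restriction to the L-resolution (the open toric subvariety given by the
  subfan in the cone <e1,e2,p_{r-a}>, whose rays are e1, p_0, ..., p_{r-a}).
  Under the lattice isomorphism identifying this cone with the standard cone of
  1/(r-a)(1, r mod (r-a), -r mod (r-a)) (e1, e2, p_{r-a} |-> e1, e2, e3),
  p_k corresponds to p^L_k, so D_k restricts to D^L_k (k <= r-a) and E_1 to E^L_1;
  the result is expressed in the labels of the L-resolution.\<close>
definition restrL :: "int \<Rightarrow> int \<Rightarrow> tdivisor \<Rightarrow> tdivisor" where
  "restrL r a X = (\<lambda>l. case l of E1 \<Rightarrow> X E1
                   | D k \<Rightarrow> (if 0 \<le> k \<and> k \<le> r - a then X (D k) else 0))"

text \<open>Restriction to the R-resolution (subfan in the cone <e1,p_{r-a},e3>, rays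
  e1, p_{r-a}, ..., p_r).  Under the identification with the standard cone of
  1/a(1, -r mod a, r mod a) (e1, p_{r-a}, e3 |-> e1, e2, e3), p_{r-a+k}
  corresponds to p^R_k, so D_{r-a+k} restricts to D^R_k and E_1 to E^R_1.\<close>
definition restrR :: "int \<Rightarrow> int \<Rightarrow> tdivisor \<Rightarrow> tdivisor" where
  "restrR r a X = (\<lambda>l. case l of E1 \<Rightarrow> X E1
                   | D k \<Rightarrow> (if 0 \<le> k \<and> k \<le> a then X (D (r - a + k)) else 0))"

end

theory Submission
  imports Defs "HOL-Number_Theory.Cong"
begin

text \<open>The divisors are governed by the recursion X_i - X_{i-a} = Z_i - Z_{i+1}, read along
  the orbit of i \<mapsto> i - a modulo r.  Since a is coprime to r this orbit is a single r-cycle,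
  so the system has exactly one solution.  Unfolding the recursion for \<tau> shows that restricting
  Z_j and Z_{j+1} to the L- or R-resolution yields either the corresponding divisors of the
  smaller resolution or two equal divisors, except at the two steps j = r - 1 (where Z_{j+1}
  wraps around to Z_0) and j = a - 1 (where j and j + 1 lie on different sides of the split).
  Both exceptional edges of the cycle end in the vertex r - 1, so for i \<le> r - 2 the
  difference between the restricted X_i and the corresponding divisor of the smaller resolution
  is carried along the remaining path from i = 0, where both sides are E_1.\<close>

lemma mod_orbit_walk:
  fixes Y :: "int \<Rightarrow> 'b" and c a r :: int
  assumes "\<And>m. m < n \<Longrightarrow> Y ((c + (int m + 1) * a) mod r) = Y ((c + int m * a) mod r)"
  shows "Y ((c + int n * a) mod r) = Y (c mod r)"
  using assms by (induction n) (simp_all add: add.commute)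

lemma mod_orbit_index:
  fixes a b c i r :: int
  assumes "[a * b = 1] (mod r)"
  shows "(c + (i - c) * b mod r * a) mod r = i mod r"
proof -
  have "[(i - c) * b mod r * a = (i - c) * (a * b)] (mod r)"
    unfolding cong_def mod_mult_left_eq by (simp add: ac_simps)
  then have "[c + (i - c) * b mod r * a = c + (i - c) * (a * b)] (mod r)"
    by (rule cong_add[OF cong_refl])
  also have "[c + (i - c) * (a * b) = c + (i - c) * 1] (mod r)"
    using assms by (intro cong_add cong_mult) auto
  finally show ?thesis
    by (simp add: cong_def)
qed

lemma mod_orbit_no_early_return:
  fixes a c m r :: int
  assumes "coprime a r" "0 \<le> m" "m < r - 1"
  shows "(c + (m + 1) * a) mod r \<noteq> c mod r"
proof
  assume "(c + (m + 1) * a) mod r = c mod r"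
  then have "[(m + 1) * a = 0 * a] (mod r)"
    using cong_add_lcancel_0[of c "(m + 1) * a" r] by (simp add: cong_def)
  then have "r dvd m + 1"
    using assms(1) by (simp add: cong_0_iff coprime_commute coprime_dvd_mult_left_iff)
  then show False
    using assms(2,3) zdvd_imp_le[of r "m + 1"] by simp
qed

lemma mod_shift_invariant_const:
  fixes Y :: "int \<Rightarrow> 'b" and a r i :: int
  assumes "coprime a r"
    and shift: "\<And>j. 0 \<le> j \<Longrightarrow> j < r \<Longrightarrow> Y j = Y ((j - a) mod r)"
    and "0 \<le> i" "i < r"
  shows "Y i = Y 0"
proof -
  obtain b where b: "[a * b = 1] (mod r)"
    using cong_solve_coprime_int[OF assms(1)] by blast
  have r: "0 < r"
    using assms(3,4) by simp
  have "Y ((0 + int n * a) mod r) = Y (0 mod r)" for n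
  proof (rule mod_orbit_walk)
    fix m
    have "Y ((0 + (int m + 1) * a) mod r) = Y (((0 + (int m + 1) * a) mod r - a) mod r)"
      using r by (intro shift) simp_all
    then show "Y ((0 + (int m + 1) * a) mod r) = Y ((0 + int m * a) mod r)"
      by (simp add: mod_diff_left_eq algebra_simps)
  qed
  from this[of "nat (i * b mod r)"] show ?thesis
    using mod_orbit_index[OF b, of 0 i] assms(3,4) by simp
qed

lemma mod_shift_invariant_off_point:
  fixes Y :: "int \<Rightarrow> 'b" and a r p i i' :: int
  assumes "coprime a r"
    and shift: "\<And>j. 0 \<le> j \<Longrightarrow> j < r \<Longrightarrow> j \<noteq> p \<Longrightarrow> (j - a) mod r \<noteq> p \<Longrightarrow>
                 Y j = Y ((j - a) mod r)"
    and p: "0 \<le> p" "p < r"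
    and i: "0 \<le> i" "i < r" "i \<noteq> p"
    and i': "0 \<le> i'" "i' < r" "i' \<noteq> p"
  shows "Y i = Y i'"
proof -
  obtain b where b: "[a * b = 1] (mod r)"
    using cong_solve_coprime_int[OF assms(1)] by blast
  \<comment> \<open>q walks the orbit starting one step after p and returns to p only at m = r - 1.\<close>
  define q where "q m = (p + a + m * a) mod r" for m
  have q_ne_p: "q m \<noteq> p" if "0 \<le> m" "m < r - 1" for m
    using mod_orbit_no_early_return[OF assms(1) that, of p] p by (simp add: q_def algebra_simps)
  have walk: "Y (q (int n)) = Y (q 0)" if "int n \<le> r - 2" for n
  proof -
    have "Y ((p + a + int n * a) mod r) = Y ((p + a) mod r)"
    proof (rule mod_orbit_walk)
      fix m assume "m < n"
      have "(q (int m + 1) - a) mod r = q (int m)"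
        by (simp add: q_def mod_diff_left_eq algebra_simps)
      moreover have "q (int m + 1) \<noteq> p" "q (int m) \<noteq> p"
        using \<open>m < n\<close> that by (simp_all add: q_ne_p)
      moreover have "0 \<le> q (int m + 1)" "q (int m + 1) < r"
        using p by (simp_all add: q_def)
      ultimately show "Y ((p + a + (int m + 1) * a) mod r) = Y ((p + a + int m * a) mod r)"
        using shift unfolding q_def by metis
    qed
    then show ?thesis
      by (simp add: q_def)
  qed
  have "Y j = Y (q 0)" if "0 \<le> j" "j < r" "j \<noteq> p" for j
  proof -
    define n where "n = (j - (p + a)) * b mod r"
    have qn: "q n = j"
      using mod_orbit_index[OF b, of "p + a" j] that by (simp add: q_def n_def)
    have "q (r - 1) = p"
      using p by (simp add: q_def algebra_simps)
    then have "n \<noteq> r - 1"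
      using qn that by auto
    moreover have "0 \<le> n" "n < r"
      using that by (simp_all add: n_def)
    ultimately show ?thesis
      using walk[of "nat n"] qn by simp
  qed
  then show ?thesis
    using i i' by metis
qed

lemma mod_orbit_bij:
  fixes a c r :: int
  assumes "coprime a r" "0 < r"
  shows "bij_betw (\<lambda>m. (c + m * a) mod r) {0..<r} {0..<r}"
proof -
  obtain b where b: "[a * b = 1] (mod r)"
    using cong_solve_coprime_int[OF assms(1)] by blast
  have "i \<in> (\<lambda>m. (c + m * a) mod r) ` {0..<r}" if "i \<in> {0..<r}" for i
  proof
    show "i = (c + (i - c) * b mod r * a) mod r"
      using mod_orbit_index[OF b, of c i] that by simp
  qed (use assms(2) in simp)
  then have onto: "(\<lambda>m. (c + m * a) mod r) ` {0..<r} = {0..<r}"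
    using assms(2) by auto
  then have "inj_on (\<lambda>m. (c + m * a) mod r) {0..<r}"
    by (intro eq_card_imp_inj_on) simp_all
  with onto show ?thesis
    by (simp add: bij_betw_def)
qed

declare tau.simps [simp del]

lemma tau_boundary: "a = 1 \<or> a = r - 1 \<Longrightarrow> tau r a i = (a * i - 1) mod r"
  by (subst tau.simps) simp

lemma tau_interior:
  "0 < a \<Longrightarrow> a < r \<Longrightarrow> a \<noteq> 1 \<Longrightarrow> a \<noteq> r - 1 \<Longrightarrow>
    tau r a i = (if a \<le> i then tau (r - a) (r mod (r - a)) (i mod (r - a))
                 else (r - a) + tau a ((- r) mod a) i)"
  by (subst tau.simps) simp

lemma tau_bounds: "0 < r \<Longrightarrow> 0 \<le> tau r a i \<and> tau r a i < r"
proof (induction r a i rule: tau.induct)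
  case (1 r a i)
  then show ?case
    by (auto simp: tau.simps[of r a i])
qed

lemma tau_pred_eq:
  fixes r i :: int
  assumes "0 \<le> i" "i < r"
  shows "tau r (r - 1) i = r - 1 - i"
proof -
  have "(r - 1) * i - 1 = (r - 1 - i) + (i - 1) * r"
    by (simp add: algebra_simps)
  then have "((r - 1) * i - 1) mod r = ((r - 1 - i) + (i - 1) * r) mod r"
    by (rule arg_cong)
  also have "\<dots> = r - 1 - i"
    using assms by (simp only: mod_mult_self1) simp
  finally show ?thesis
    by (simp add: tau_boundary)
qed

text \<open>For 0 < a < r these are the recursive branches of \<tau>; the point is that the closed forms
  used when a = 1 or a = r - 1 satisfy the same recursion.\<close>

lemma tau_ge:
  fixes r a i :: int
  assumes "0 < a" "a \<le> i" "i < r"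
  shows "tau r a i = tau (r - a) (r mod (r - a)) (i mod (r - a))"
proof -
  consider "a = 1" | "a \<noteq> 1" "a = r - 1" | "a \<noteq> 1" "a \<noteq> r - 1"
    by blast
  then show ?thesis
  proof cases
    case 1
    define s where "s = r - 1"
    have "(1 + s) mod s = 1" if "1 < s"
      using that by simp
    then have s: "r mod s = 1 \<or> r mod s = s - 1"
      using assms 1 by (cases "s = 1") (auto simp: s_def)
    have "[r mod s * (i mod s) - 1 = r * i - 1] (mod s)"
      by (intro cong_diff cong_mult) (simp_all add: cong_def)
    moreover have "r * i - 1 = (i - 1) + i * s"
      by (simp add: s_def algebra_simps)
    ultimately have "(r mod s * (i mod s) - 1) mod s = (i - 1) mod s"
      by (simp add: cong_def)
    also have "\<dots> = i - 1"
      using assms 1 by (simp add: s_def)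
    finally show ?thesis
      using 1 s tau_boundary[of 1 r i] tau_boundary[of "r mod s" s "i mod s"] assms
      by (simp add: s_def)
  next
    case 2
    then have "tau r a i = 0"
      using assms tau_pred_eq[of i r] by simp
    moreover have "tau 1 0 0 = 0"
      by (simp add: tau_boundary)
    ultimately show ?thesis
      using 2 by simp
  next
    case 3
    then show ?thesis
      using assms tau_interior[of a r i] by simp
  qed
qed

lemma tau_lt:
  fixes r a i :: int
  assumes "0 \<le> i" "i < a" "a < r"
  shows "tau r a i = (r - a) + tau a ((- r) mod a) i"
proof -
  consider "a = 1" | "a \<noteq> 1" "a = r - 1" | "a \<noteq> 1" "a \<noteq> r - 1"
    by blast
  then show ?thesis
  proof cases
    case 1
    then have "i = 0"
      using assms by simp
    then show ?thesis
      unfolding \<open>i = 0\<close> using assms 1 tau_boundary[of 1 r 0] tau_boundary[of 0 1 0]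
      by (simp add: zmod_zminus1_eq_if)
  next
    case 2
    then have "tau r a i = r - 1 - i"
      using assms tau_pred_eq[of i r] by simp
    moreover have "(- r) mod a = a - 1"
    proof -
      have "- r = (a - 1) + (- 2) * a"
        using 2 by simp
      then have "(- r) mod a = (a - 1) mod a"
        by (simp only: mod_mult_self1)
      then show ?thesis
        using assms 2 by (simp add: zmod_zminus1_eq_if)
    qed
    moreover have "tau a (a - 1) i = a - 1 - i"
      using assms tau_pred_eq[of i a] by simp
    ultimately show ?thesis
      using 2 by simp
  next
    case 3
    then show ?thesis
      using assms tau_interior[of a r i] by simp
  qed
qed

lemma Xsys_step:
  assumes "Xsys r a X" "0 \<le> j" "j < r"
  shows "X j l - X ((j - a) mod r) l = Zdiv r a j l - Zdiv r a ((j + 1) mod r) l"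
proof -
  have "X j l + Zdiv r a ((j + 1) mod r) l = Zdiv r a j l + X ((j - a) mod r) l"
    using assms unfolding Xsys_def by blast
  then show ?thesis
    by simp
qed

lemma Xsys_unique:
  assumes "coprime a r" and X: "Xsys r a X" and X': "Xsys r a X'"
  shows "X = X'"
proof (intro ext)
  fix i l
  show "X i l = X' i l"
  proof (cases "0 \<le> i \<and> i < r")
    case True
    have "X i l - X' i l = X 0 l - X' 0 l"
    proof (rule mod_shift_invariant_const[OF assms(1), where Y = "\<lambda>j. X j l - X' j l"])
      fix j assume "0 \<le> j" "j < r"
      then show "X j l - X' j l = X ((j - a) mod r) l - X' ((j - a) mod r) l"
        using Xsys_step[OF X, of j l] Xsys_step[OF X', of j l] by simp
    qed (use True in auto)
    moreover have "X 0 = X' 0"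
      using X X' by (simp add: Xsys_def)
    ultimately show ?thesis
      by simp
  next
    case False
    then show ?thesis
      using X X' by (simp add: Xsys_def)
  qed
qed

lemma sum_mod_orbit:
  fixes a c r :: int
  assumes "coprime a r" "0 < r"
  shows "(\<Sum>m\<in>{0..<r}. g ((c + m * a) mod r)) = (\<Sum>j\<in>{0..<r}. g j)"
  using sum.reindex_bij_betw[OF mod_orbit_bij[OF assms]] .

lemma mod_orbit_index_pred:
  fixes a b i r :: int
  assumes "[a * b = 1] (mod r)"
  shows "(i - a) mod r * b mod r = (i * b mod r - 1) mod r"
proof -
  have "[(i - a) mod r * b = i * b - a * b] (mod r)"
    unfolding cong_def mod_mult_left_eq by (simp add: algebra_simps)
  also have "[i * b - a * b = i * b mod r - 1] (mod r)"
    using assms by (intro cong_diff) (simp_all add: cong_def)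
  finally show ?thesis
    by (simp add: cong_def)
qed

lemma cyclic_partial_sum_diff:
  fixes T :: "int \<Rightarrow> 'a::ab_group_add"
  assumes "(\<Sum>m\<in>{0..<r}. T m) = 0" "0 \<le> n" "n < r"
  shows "(\<Sum>m\<in>{1..n}. T m) - (\<Sum>m\<in>{1..(n - 1) mod r}. T m) = T n"
proof (cases "n = 0")
  case True
  have "{0..<r} = insert 0 {1..r - 1}"
    using assms by auto
  then have "(\<Sum>m\<in>{1..r - 1}. T m) = - T 0"
    using assms(1) by (simp add: eq_neg_iff_add_eq_0 add.commute)
  moreover have "(n - 1) mod r = r - 1"
    using True assms by (cases "r = 1") (simp_all add: zmod_zminus1_eq_if)
  ultimately show ?thesis
    using True by simp
next
  case False
  then have "{1..n} = insert n {1..n - 1}"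
    using assms by auto
  then show ?thesis
    using assms False by simp
qed

text \<open>The witness walks around the orbit 0, a, 2a, \<dots>: the divisor at n a mod r is E_1 plus the
  first n differences Z_{ma} - Z_{ma+1}, and the r differences sum to zero.\<close>

lemma Xsys_exists:
  fixes r a :: int
  assumes r: "0 < r" and coprime: "coprime a r"
  shows "\<exists>X. Xsys r a X"
proof -
  obtain b where b: "[a * b = 1] (mod r)"
    using cong_solve_coprime_int[OF coprime] by blast
  define T where "T m l = Zdiv r a (m * a mod r) l - Zdiv r a ((1 + m * a) mod r) l" for m l
  define X where "X i = (if 0 \<le> i \<and> i < r
    then (\<lambda>l. Ediv l + (\<Sum>m\<in>{1..i * b mod r}. T m l)) else (\<lambda>l. 0))" for i
  have T_total: "(\<Sum>m\<in>{0..<r}. T m l) = 0" for l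
    using sum_mod_orbit[OF coprime r, of "\<lambda>j. Zdiv r a j l" 0]
      sum_mod_orbit[OF coprime r, of "\<lambda>j. Zdiv r a j l" 1]
    by (simp add: T_def sum_subtractf)
  have "Xsys r a X"
    unfolding Xsys_def
  proof (intro conjI allI impI)
    fix i l assume i: "0 \<le> i \<and> i < r"
    define n where "n = i * b mod r"
    have n: "0 \<le> n" "n < r"
      using r by (simp_all add: n_def)
    have "n * a mod r = i"
      using mod_orbit_index[OF b, of 0 i] i by (simp add: n_def)
    moreover have "(1 + n * a) mod r = (1 + n * a mod r) mod r"
      by (simp add: mod_add_right_eq)
    ultimately have "T n l = Zdiv r a i l - Zdiv r a ((i + 1) mod r) l"
      by (simp add: T_def add.commute)
    then have "X i l - X ((i - a) mod r) l = Zdiv r a i l - Zdiv r a ((i + 1) mod r) l"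
      using cyclic_partial_sum_diff[OF T_total n, of l] mod_orbit_index_pred[OF b, of i] i r
      by (simp add: X_def n_def)
    then show "X i l + Zdiv r a ((i + 1) mod r) l = Zdiv r a i l + X ((i - a) mod r) l"
      by simp
  qed (use r in \<open>auto simp: X_def\<close>)
  then show ?thesis
    by blast
qed

lemma Xsys_Xdiv:
  assumes "0 < r" "coprime a r"
  shows "Xsys r a (Xdiv r a)"
  unfolding Xdiv_def
  using Xsys_exists[OF assms] Xsys_unique[OF assms(2)] by (metis theI)

lemma coprime_mod_diff:
  fixes a r :: int
  assumes "coprime a r" "a < r"
  shows "coprime (r mod (r - a)) (r - a)"
proof -
  have "coprime (r - a) r"
    using assms(1) gcd_diff2[of r a] by (simp add: coprime_iff_gcd_eq_1)
  then show ?thesis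
    using assms(2) by (simp add: coprime_commute)
qed

lemma coprime_uminus_mod:
  fixes a r :: int
  assumes "coprime a r" "0 < a"
  shows "coprime ((- r) mod a) a"
  using assms by (simp add: coprime_commute)

lemma restrL_diff:
  assumes "(\<lambda>l. F l - G l) = (\<lambda>l. H l - K l)"
  shows "restrL r a F l - restrL r a G l = restrL r a H l - restrL r a K l"
  using assms by (simp add: restrL_def fun_eq_iff split: tlabel.split)

lemma restrR_diff:
  assumes "(\<lambda>l. F l - G l) = (\<lambda>l. H l - K l)"
  shows "restrR r a F l - restrR r a G l = restrR r a H l - restrR r a K l"
  using assms by (simp add: restrR_def fun_eq_iff split: tlabel.split)

lemma restrL_Ediv: "restrL r a Ediv = Ediv"
  by (simp add: fun_eq_iff restrL_def Ediv_def split: tlabel.split)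

lemma restrR_Ediv: "restrR r a Ediv = Ediv"
  by (simp add: fun_eq_iff restrR_def Ediv_def split: tlabel.split)

lemma restrL_Zdiv_ge:
  assumes "0 < a" "a \<le> j" "j < r"
  shows "restrL r a (Zdiv r a j) = Zdiv (r - a) (r mod (r - a)) (j mod (r - a))"
  using tau_ge[OF assms] tau_bounds[of "r - a" "r mod (r - a)" "j mod (r - a)"] assms
  by (auto simp: fun_eq_iff restrL_def Zdiv_def split: tlabel.split)

lemma restrL_Zdiv_lt:
  assumes "0 \<le> j" "j < a" "a < r"
  shows "restrL r a (Zdiv r a j) = (\<lambda>l. 0)"
  using tau_lt[OF assms] tau_bounds[of a "(- r) mod a" j] assms
  by (auto simp: fun_eq_iff restrL_def Zdiv_def split: tlabel.split)

lemma restrR_Zdiv_ge: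
  assumes "0 < a" "a \<le> j" "j < r"
  shows "restrR r a (Zdiv r a j) = (\<lambda>l. case l of E1 \<Rightarrow> 0 | D k \<Rightarrow> if 0 \<le> k \<and> k \<le> a then 1 else 0)"
  using tau_ge[OF assms] tau_bounds[of "r - a" "r mod (r - a)" "j mod (r - a)"] assms
  by (auto simp: fun_eq_iff restrR_def Zdiv_def split: tlabel.split)

lemma restrR_Zdiv_lt:
  assumes "0 \<le> j" "j < a" "a < r"
  shows "restrR r a (Zdiv r a j) = Zdiv a ((- r) mod a) j"
  using tau_lt[OF assms] tau_bounds[of a "(- r) mod a" j] assms
  by (auto simp: fun_eq_iff restrR_def Zdiv_def split: tlabel.split)

lemma restrL_step:
  fixes r a j :: int
  assumes a: "0 < a" "a < r" and X: "Xsys r a X" and XL: "Xsys (r - a) (r mod (r - a)) XL"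
    and j: "0 \<le> j" "j < r" "j \<noteq> r - 1" "(j - a) mod r \<noteq> r - 1"
  shows "restrL r a (X j) l - XL (j mod (r - a)) l =
    restrL r a (X ((j - a) mod r)) l - XL ((j - a) mod r mod (r - a)) l"
proof -
  have X_step: "(\<lambda>l. X j l - X ((j - a) mod r) l) = (\<lambda>l. Zdiv r a j l - Zdiv r a (j + 1) l)"
    using Xsys_step[OF X j(1,2)] j by (simp add: fun_eq_iff)
  show ?thesis
  proof (cases "a \<le> j")
    case True
    have "j - r = (j - a) + (- 1) * (r - a)"
      by simp
    then have "(j mod (r - a) - r mod (r - a)) mod (r - a) = (j - a) mod (r - a)"
      by (simp only: mod_diff_eq mod_mult_self1)
    moreover have "(j mod (r - a) + 1) mod (r - a) = (j + 1) mod (r - a)"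
      by (simp add: mod_add_left_eq)
    ultimately have "XL (j mod (r - a)) l - XL ((j - a) mod (r - a)) l =
        Zdiv (r - a) (r mod (r - a)) (j mod (r - a)) l -
        Zdiv (r - a) (r mod (r - a)) ((j + 1) mod (r - a)) l"
      using Xsys_step[OF XL, of "j mod (r - a)" l] a by simp
    moreover have "(j - a) mod r = j - a"
      using True j(2) a(1) by simp
    ultimately show ?thesis
      using restrL_diff[OF X_step, of r a l] True j a by (simp add: restrL_Zdiv_ge)
  next
    case False
    have "(j - a) mod r = (j + (r - a) + (- 1) * r) mod r"
      by simp
    then have ja: "(j - a) mod r = j + (r - a)"
      using False j(1) a(2) by (simp only: mod_mult_self1) simp
    then have "j + 1 < a"
      using False j by auto
    then show ?thesis
      using restrL_diff[OF X_step, of r a l] False j a ja by (simp add: restrL_Zdiv_lt)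
  qed
qed

lemma restrR_step:
  fixes r a j :: int
  assumes a: "0 < a" "a < r" and X: "Xsys r a X" and XR: "Xsys a ((- r) mod a) XR"
    and j: "0 \<le> j" "j < r" "j \<noteq> r - 1" "(j - a) mod r \<noteq> r - 1"
  shows "restrR r a (X j) l - XR (j mod a) l =
    restrR r a (X ((j - a) mod r)) l - XR ((j - a) mod r mod a) l"
proof -
  have X_step: "(\<lambda>l. X j l - X ((j - a) mod r) l) = (\<lambda>l. Zdiv r a j l - Zdiv r a (j + 1) l)"
    using Xsys_step[OF X j(1,2)] j by (simp add: fun_eq_iff)
  show ?thesis
  proof (cases "a \<le> j")
    case True
    have "(j - a) mod r = j - a"
      using True j(2) a(1) by simp
    moreover have "(j + (- 1) * a) mod a = j mod a"
      by (rule mod_mult_self1)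
    ultimately show ?thesis
      using restrR_diff[OF X_step, of r a l] True j a by (simp add: restrR_Zdiv_ge)
  next
    case False
    have "(j - a) mod r = (j + (r - a) + (- 1) * r) mod r"
      by simp
    then have ja: "(j - a) mod r = j + (r - a)"
      using False j(1) a(2) by (simp only: mod_mult_self1) simp
    then have "j + 1 < a"
      using False j by auto
    have "(j - (- r) mod a) mod a = (j + (r - a) + 1 * a) mod a"
      by (simp add: mod_diff_right_eq)
    also have "\<dots> = (j + (r - a)) mod a"
      by (rule mod_mult_self1)
    finally have "XR j l - XR ((j + (r - a)) mod a) l =
        Zdiv a ((- r) mod a) j l - Zdiv a ((- r) mod a) (j + 1) l"
      using Xsys_step[OF XR, of j l] False j \<open>j + 1 < a\<close> by simp
    then show ?thesis
      using restrR_diff[OF X_step, of r a l] False j a \<open>j + 1 < a\<close> ja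
      by (simp add: restrR_Zdiv_lt)
  qed
qed

lemma restrL_Xdiv:
  fixes r a i :: int
  assumes a: "0 < a" "a < r" and coprime: "coprime a r" and i: "0 \<le> i" "i \<le> r - 2"
  shows "restrL r a (Xdiv r a i) = Xdiv (r - a) (r mod (r - a)) (i mod (r - a))"
proof -
  have X: "Xsys r a (Xdiv r a)"
    using Xsys_Xdiv[OF _ coprime] a by simp
  have XL: "Xsys (r - a) (r mod (r - a)) (Xdiv (r - a) (r mod (r - a)))"
    using Xsys_Xdiv[OF _ coprime_mod_diff[OF coprime a(2)]] a by simp
  let ?Y = "\<lambda>j l. restrL r a (Xdiv r a j) l - Xdiv (r - a) (r mod (r - a)) (j mod (r - a)) l"
  have "?Y i = ?Y 0"
    by (rule mod_shift_invariant_off_point[OF coprime, where p = "r - 1"])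
      (use a i in \<open>auto intro!: ext restrL_step[OF a X XL]\<close>)
  moreover have "?Y 0 = (\<lambda>l. 0)"
    using X XL by (simp add: Xsys_def restrL_Ediv)
  ultimately show ?thesis
    by (simp add: fun_eq_iff)
qed

lemma restrR_Xdiv:
  fixes r a i :: int
  assumes a: "0 < a" "a < r" and coprime: "coprime a r" and i: "0 \<le> i" "i \<le> r - 2"
  shows "restrR r a (Xdiv r a i) = Xdiv a ((- r) mod a) (i mod a)"
proof -
  have X: "Xsys r a (Xdiv r a)"
    using Xsys_Xdiv[OF _ coprime] a by simp
  have XR: "Xsys a ((- r) mod a) (Xdiv a ((- r) mod a))"
    using Xsys_Xdiv[OF a(1) coprime_uminus_mod[OF coprime a(1)]] .
  let ?Y = "\<lambda>j l. restrR r a (Xdiv r a j) l - Xdiv a ((- r) mod a) (j mod a) l"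
  have "?Y i = ?Y 0"
    by (rule mod_shift_invariant_off_point[OF coprime, where p = "r - 1"])
      (use a i in \<open>auto intro!: ext restrR_step[OF a X XR]\<close>)
  moreover have "?Y 0 = (\<lambda>l. 0)"
    using X XR by (simp add: Xsys_def restrR_Ediv)
  ultimately show ?thesis
    by (simp add: fun_eq_iff)
qed

theorem mainTheorem4:
  fixes r a i :: int
  assumes "0 < a" and "a < r" and "coprime a r"
    and "0 \<le> i" and "i \<le> r - 2"
  shows "restrL r a (Xdiv r a i) = Xdiv (r - a) (r mod (r - a)) (i mod (r - a)) \<and>
         restrR r a (Xdiv r a i) = Xdiv a ((- r) mod a) (i mod a)"
  using restrL_Xdiv[OF assms] restrR_Xdiv[OF assms] by blast

end
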